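(* Assume the scores are produced by a symmetric transformation, the intervals $\mathcal{I}_1,\ldots,\mathcal{I}_L$ are fixed (data-independent), and $H_0$ holds ($Z_1,\ldots,Z_n$ i.i.d. with an arbitrary law). Then for every $\alpha\in(0,1)$ and every integer $B\ge1$, $\Pr\{p_{B,\mathrm{multi}}<\alpha\}=\alpha$.
   Context: Let $Z_1,\ldots,Z_n$ be independent random elements of a measurable space $\mathcal{Z}$, $\mathcal{D}=(Z_1,\ldots,Z_n)$. A measurable $\mathbb{S}:\mathcal{Z}\times\mathcal{Z}^n\to\mathbb{R}$ is a symmetric transformation if $\mathbb{S}(z;\mathcal{D})=\mathbb{S}(z;\mathcal{D}_\pi)$ for all $z$ and all permutations $\pi$ of $[n]$, where $\mathcal{D}_\pi=(Z_{\pi(1)},\ldots,Z_{\pi(n)})$. Scores: $S_i=\mathbb{S}(Z_i;\mathcal{D})+\epsilon e_i$ with fixed $\epsilon>0$ and $e_i$ i.i.d. $\mathcal{N}(0,1)$ independent of the data. Let $\mathcal{I}_1,\ldots,\mathcal{I}_L$ be nonempty subintervals of $\{1,\ldots,n\}$. Local ranks: $R_{i,\ell}=|\{j\in\mathcal{I}_\ell:S_j\le S_i\}|$ for $i\in\mathcal{I}_\ell$. The aggregation function $\mathbb{A}$ maps finite rank vectors to $[0,\infty)$; $T_{n,\ell}=\mathbb{A}((R_{i,\ell})_{i\in\mathcal{I}_\ell})$ (ranks in increasing order of $i$), and $T_{n,\mathrm{multi}}=\max_{\ell\in[L]}T_{n,\ell}$. For a permutation $\pi$ of $[n]$, $\mathbb{G}(\pi)_\ell=\mathbb{A}\big((|\{j\in\mathcal{I}_\ell:\pi(j)\le\pi(i)\}|)_{i\in\mathcal{I}_\ell}\big)$.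 Let $\pi_1,\ldots,\pi_B$ be i.i.d. uniform random permutations of $[n]$ and $U\sim\mathcal{U}(0,1)$, all mutually independent and independent of the data, and $p_{B,\mathrm{multi}}=\frac{\sum_{b=1}^B\mathbf{1}\{\|\mathbb{G}(\pi_b)\|_\infty>T_{n,\mathrm{multi}}\}+U\big[1+\sum_{b=1}^B\mathbf{1}\{\|\mathbb{G}(\pi_b)\|_\infty=T_{n,\mathrm{multi}}\}\big]}{B+1}.$ *)

theory Defs
  imports "HOL-Probability.Probability"
begin

definition score :: "('z \<Rightarrow> (nat \<Rightarrow> 'z) \<Rightarrow> real) \<Rightarrow> real \<Rightarrow> (nat \<Rightarrow> 'z) \<Rightarrow> (nat \<Rightarrow> real) \<Rightarrow> nat \<Rightarrow> real" where
  "score S \<epsilon> D e i = S (D i) D + \<epsilon> * e i"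

definition local_rank :: "(nat \<Rightarrow> 'a::linorder) \<Rightarrow> nat set \<Rightarrow> nat \<Rightarrow> nat" where
  "local_rank s J i = card {j \<in> J. s j \<le> s i}"

definition local_stat :: "(nat list \<Rightarrow> real) \<Rightarrow> (nat \<Rightarrow> 'a::linorder) \<Rightarrow> nat set \<Rightarrow> real" where
  "local_stat A s J = A (map (local_rank s J) (sorted_list_of_set J))"

definition T_multi :: "(nat list \<Rightarrow> real) \<Rightarrow> (nat \<Rightarrow> nat set) \<Rightarrow> nat \<Rightarrow> (nat \<Rightarrow> real) \<Rightarrow> real" where
  "T_multi A I L s = Max ((\<lambda>l. local_stat A s (I l)) ` {1..L})"

definition G :: "(nat list \<Rightarrow> real) \<Rightarrow> (nat \<Rightarrow> nat set) \<Rightarrow> (nat \<Rightarrow> nat) \<Rightarrow> nat \<Rightarrow> real" where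
  "G A I \<pi> l = local_stat A \<pi> (I l)"

definition G_supnorm :: "(nat list \<Rightarrow> real) \<Rightarrow> (nat \<Rightarrow> nat set) \<Rightarrow> nat \<Rightarrow> (nat \<Rightarrow> nat) \<Rightarrow> real" where
  "G_supnorm A I L \<pi> = Max ((\<lambda>l. \<bar>G A I \<pi> l\<bar>) ` {1..L})"

definition p_multi :: "(nat list \<Rightarrow> real) \<Rightarrow> (nat \<Rightarrow> nat set) \<Rightarrow> nat \<Rightarrow> nat \<Rightarrow> real
    \<Rightarrow> (nat \<Rightarrow> nat \<Rightarrow> nat) \<Rightarrow> real \<Rightarrow> real" where
  "p_multi A I L B T perms U =
     (real (card {b \<in> {1..B}. G_supnorm A I L (perms b) > T})
      + U * (1 + real (card {b \<in> {1..B}. G_supnorm A I L (perms b) = T}))) / (real B + 1)"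

definition perm_measure :: "nat \<Rightarrow> (nat \<Rightarrow> nat) measure" where
  "perm_measure n = measure_pmf (pmf_of_set {\<pi>. \<pi> permutes {1..n}})"

definition std_normal_measure :: "real measure" where
  "std_normal_measure = density lborel std_normal_density"

text \<open>Joint law of (Z_1..Z_n iid P, e_1..e_n iid N(0,1), pi_1..pi_B iid uniform permutations, U ~ U(0,1)),
  all independent.\<close>
definition joint_measure :: "'z measure \<Rightarrow> nat \<Rightarrow> nat
    \<Rightarrow> ((nat \<Rightarrow> 'z) \<times> (nat \<Rightarrow> real) \<times> (nat \<Rightarrow> nat \<Rightarrow> nat) \<times> real) measure" where
  "joint_measure P n B =
     PiM {1..n} (\<lambda>_. P) \<Otimes>\<^sub>M (PiM {1..n} (\<lambda>_. std_normal_measure) \<Otimes>\<^sub>M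
       (PiM {1..B} (\<lambda>_. perm_measure n) \<Otimes>\<^sub>M uniform_measure lborel {0..1}))"

end

(*
  Permuting the data along a permutation sigma of {1..n} preserves the joint law under H0,
  and by symmetry of the transformation it permutes the scores. Averaging the event over all
  sigma therefore replaces the observed statistic by T_multi (S o sigma) with sigma uniform.
  The Gaussian noise makes the scores almost surely distinct; then T_multi sees only the rank
  permutation of the scores, so T_multi (S o sigma) is distributed as the norm of G(pi_0) for a
  uniform pi_0 independent of pi_1, ..., pi_B. The observed statistic is thus exchangeable with
  the B resampled ones. The randomisation U spreads every tie block uniformly over its rank
  interval, and summing over the B + 1 exchangeable positions these intervals tile
  [0, alpha (B + 1)], which gives P(p < alpha) = alpha exactly.
*)

theory Submission
  imports Defs
begin

section \<open>Tie-breaking by uniform shares\<close>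

definition clipped_length :: "real \<Rightarrow> real \<Rightarrow> real \<Rightarrow> real" where
  "clipped_length c K M = min (max (c - K) 0) M"

text \<open>If K points of X lie strictly above k and M points (k included) are tied with it, a uniform
  tie-break puts k at position K + U M with U uniform on [0, 1]; \<open>tie_share c X t k\<close> is the
  probability that this position lies below c.\<close>

definition tie_share :: "real \<Rightarrow> 'i set \<Rightarrow> ('i \<Rightarrow> real) \<Rightarrow> 'i \<Rightarrow> real" where
  "tie_share c X t k =
     clipped_length c (card {j\<in>X. t j > t k}) (card {j\<in>X. t j = t k}) / card {j\<in>X. t j = t k}"

lemma tie_share_top:
  assumes "k \<in> X" "\<forall>j\<in>X. t j \<le> t k"
  shows "tie_share c X t k = clipped_length c 0 (card {j\<in>X. t j = t k}) / card {j\<in>X. t j = t k}"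
proof -
  have "{j\<in>X. t j > t k} = {}"
    using assms by force
  then show ?thesis
    unfolding tie_share_def by (simp only: card.empty of_nat_0)
qed

lemma tie_share_below:
  assumes "finite C" "finite X" "C \<inter> X = {}" "\<forall>j\<in>C. t j > t k"
  shows "tie_share c (C \<union> X) t k = tie_share (c - card C) X t k"
proof -
  have "{j\<in>C \<union> X. t j > t k} = C \<union> {j\<in>X. t j > t k}" "{j\<in>C \<union> X. t j = t k} = {j\<in>X. t j = t k}"
    using assms(4) by auto
  moreover have "card (C \<union> {j\<in>X. t j > t k}) = card C + card {j\<in>X. t j > t k}"
    using assms(1-3) by (intro card_Un_disjoint) auto
  ultimately show ?thesis
    by (simp add: tie_share_def clipped_length_def algebra_simps)
qed

text \<open>Sorted downwards, the tie blocks tile [0, card X] by their intervals [K, K + M].\<close>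

lemma sum_tie_share:
  fixes t :: "'i \<Rightarrow> real"
  assumes "finite X"
  shows "(\<Sum>k\<in>X. tie_share c X t k) = min (max c 0) (card X)"
  using assms
proof (induction "card X" arbitrary: X c rule: less_induct)
  case less
  show ?case
  proof (cases "X = {}")
    case False
    define m where "m = Max (t ` X)"
    define C where "C = {k\<in>X. t k = m}"
    define X' where "X' = X - C"
    have m_ge: "t k \<le> m" if "k \<in> X" for k
      unfolding m_def using less.prems that by auto
    have "m \<in> t ` X"
      unfolding m_def using False less.prems by simp
    then have "C \<noteq> {}"
      by (auto simp: C_def)
    have fin: "finite C" "finite X'"
      using less.prems by (auto simp: C_def X'_def)
    have X_split: "X = C \<union> X'" "C \<inter> X' = {}"
      by (auto simp: C_def X'_def)
    then have card_X: "card X = card C + card X'"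
      using fin card_Un_disjoint by metis
    have top: "tie_share c X t k = clipped_length c 0 (card C) / card C" if "k \<in> C" for k
    proof -
      have "{j\<in>X. t j = t k} = C"
        using that by (auto simp: C_def)
      with that show ?thesis
        using m_ge tie_share_top[of k X t c] by (simp add: C_def)
    qed
    have rest: "tie_share c X t k = tie_share (c - card C) X' t k" if "k \<in> X'" for k
    proof -
      have "\<forall>j\<in>C. t j > t k"
        using that m_ge by (force simp: C_def X'_def)
      then show ?thesis
        using tie_share_below[OF fin X_split(2)] X_split(1) by simp
    qed
    have "(\<Sum>k\<in>X. tie_share c X t k) = (\<Sum>k\<in>C. tie_share c X t k) + (\<Sum>k\<in>X'. tie_share c X t k)"
      using X_split fin by (simp add: sum.union_disjoint)
    also have "\<dots> = clipped_length c 0 (card C) + (\<Sum>k\<in>X'. tie_share (c - card C) X' t k)"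
      using top rest \<open>C \<noteq> {}\<close> fin by simp
    also have "\<dots> = min (max c 0) (card C) + min (max (c - card C) 0) (card X')"
      using less.hyps[of X'] fin card_X \<open>C \<noteq> {}\<close> by (simp add: clipped_length_def card_gt_0_iff)
    also have "\<dots> = min (max c 0) (card X)"
      using card_X by (simp add: min_def max_def)
    finally show ?thesis .
  qed simp
qed

lemma tie_share_permute:
  assumes "\<sigma> permutes X"
  shows "tie_share c X (t \<circ> \<sigma>) k = tie_share c X t (\<sigma> k)"
proof -
  have card_eq: "card {j\<in>X. Q (t (\<sigma> j))} = card {j\<in>X. Q (t j)}" for Q
  proof -
    have "bij_betw \<sigma> {j\<in>X. Q (t (\<sigma> j))} {j\<in>X. Q (t j)}"
      by (rule bij_betw_byWitness[where f'="inv \<sigma>"])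
        (use assms in \<open>auto simp: permutes_in_image permutes_inverses permutes_inv[THEN permutes_in_image]\<close>)
    then show ?thesis
      by (rule bij_betw_same_card)
  qed
  show ?thesis
    using card_eq[of "\<lambda>v. v > t (\<sigma> k)"] card_eq[of "\<lambda>v. v = t (\<sigma> k)"]
    by (simp add: tie_share_def)
qed

lemma sum_PiE_tie_share:
  fixes g :: "'a \<Rightarrow> real" and c :: real
  assumes "finite X" "k\<^sub>0 \<in> X"
  shows "card X * (\<Sum>x\<in>PiE X (\<lambda>_. Y). tie_share c X (g \<circ> x) k\<^sub>0)
       = card (PiE X (\<lambda>_. Y)) * min (max c 0) (card X)"
proof -
  let ?F = "PiE X (\<lambda>_. Y)"
  have shift: "(\<Sum>x\<in>?F. tie_share c X (g \<circ> x) k\<^sub>0) = (\<Sum>x\<in>?F. tie_share c X (g \<circ> x) k)"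
    if "k \<in> X" for k
  proof -
    let ?\<tau> = "Transposition.transpose k\<^sub>0 k"
    have \<tau>: "?\<tau> permutes X"
      using assms that by (rule_tac permutes_swap_id) auto
    have "(\<Sum>x\<in>?F. tie_share c X (g \<circ> x) k\<^sub>0) = (\<Sum>x\<in>?F. tie_share c X (g \<circ> (x \<circ> ?\<tau>)) k\<^sub>0)"
      using \<tau> by (intro sum.reindex_bij_witness[where i="\<lambda>x. x \<circ> ?\<tau>" and j="\<lambda>x. x \<circ> ?\<tau>"])
        (auto simp: PiE_iff permutes_in_image permutes_not_in extensional_def comp_assoc)
    also have "\<dots> = (\<Sum>x\<in>?F. tie_share c X (g \<circ> x) k)"
      using \<tau> by (simp add: o_assoc tie_share_permute)
    finally show ?thesis .
  qed
  have "card X * (\<Sum>x\<in>?F. tie_share c X (g \<circ> x) k\<^sub>0) = (\<Sum>k\<in>X. \<Sum>x\<in>?F. tie_share c X (g \<circ> x) k\<^sub>0)"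
    by simp
  also have "\<dots> = (\<Sum>k\<in>X. \<Sum>x\<in>?F. tie_share c X (g \<circ> x) k)"
    by (rule sum.cong[OF refl shift])
  also have "\<dots> = (\<Sum>x\<in>?F. \<Sum>k\<in>X. tie_share c X (g \<circ> x) k)"
    by (rule sum.swap)
  also have "\<dots> = card ?F * min (max c 0) (card X)"
    using assms by (simp add: sum_tie_share)
  finally show ?thesis .
qed

lemma sum_PiE_tie_share_eq:
  fixes g :: "'a \<Rightarrow> real" and \<alpha> :: real
  assumes "0 \<le> \<alpha>" "\<alpha> \<le> 1"
  shows "(\<Sum>x\<in>PiE {0..B} (\<lambda>_. Y). tie_share (\<alpha> * (real B + 1)) {0..B} (g \<circ> x) 0)
       = card (PiE {0..B} (\<lambda>_. Y)) * \<alpha>"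
proof -
  let ?c = "\<alpha> * (real B + 1)"
  have card_0B: "real (card {0..B}) = real B + 1"
    by simp
  have min_c: "min (max ?c 0) (real B + 1) = ?c"
    using assms by simp
  have "(real B + 1) * (\<Sum>x\<in>PiE {0..B} (\<lambda>_. Y). tie_share ?c {0..B} (g \<circ> x) 0)
      = card (PiE {0..B} (\<lambda>_. Y)) * ?c"
    by (rule sum_PiE_tie_share[of "{0..B}" 0 ?c g Y, unfolded card_0B min_c]) simp_all
  also have "\<dots> = (real B + 1) * (card (PiE {0..B} (\<lambda>_. Y)) * \<alpha>)"
    by (simp add: ac_simps)
  finally show ?thesis
    by (subst (asm) mult_left_cancel) auto
qed

lemma sum_PiE_insert:
  assumes "i \<notin> I"
  shows "(\<Sum>x\<in>PiE (insert i I) Y. f x) = (\<Sum>h\<in>PiE I Y. \<Sum>y\<in>Y i. f (h(i := y)))"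
proof -
  have "(\<Sum>x\<in>PiE (insert i I) Y. f x) = (\<Sum>(y, h)\<in>Y i \<times> PiE I Y. f (h(i := y)))"
    unfolding PiE_insert_eq using assms
    by (subst sum.reindex[OF inj_combinator]) (simp_all add: case_prod_beta)
  also have "\<dots> = (\<Sum>y\<in>Y i. \<Sum>h\<in>PiE I Y. f (h(i := y)))"
    by (rule sum.cartesian_product[symmetric])
  finally show ?thesis
    by (simp add: sum.swap[of _ "Y i"])
qed

lemma integral_of_bool: "(\<integral>x. of_bool (P x) \<partial>M) = measure M {x \<in> space M. P x}"
proof -
  have "(\<integral>x. of_bool (P x) \<partial>M) = (\<integral>x. indicator {x \<in> space M. P x} x \<partial>M)"
    by (intro Bochner_Integration.integral_cong) (auto simp: indicator_def)
  also have "\<dots> = measure M ({x \<in> space M. P x} \<inter> space M)"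
    by (rule Bochner_Integration.integral_indicator)
  also have "{x \<in> space M. P x} \<inter> space M = {x \<in> space M. P x}"
    by blast
  finally show ?thesis .
qed

lemma integral_PiM_pmf_of_set:
  fixes f :: "('i \<Rightarrow> 'a) \<Rightarrow> real"
  assumes I: "finite I" and Y: "finite Y" "Y \<noteq> {}"
    and f: "f \<in> borel_measurable (PiM I (\<lambda>_. measure_pmf (pmf_of_set Y)))"
  shows "(\<integral>x. f x \<partial>PiM I (\<lambda>_. measure_pmf (pmf_of_set Y)))
       = (\<Sum>x\<in>PiE I (\<lambda>_. Y). f x) / card (PiE I (\<lambda>_. Y))"
proof -
  let ?M = "PiM I (\<lambda>_. measure_pmf (pmf_of_set Y))"
  let ?F = "PiE I (\<lambda>_. Y)"
  interpret product_sigma_finite "\<lambda>_. measure_pmf (pmf_of_set Y)"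
    by (auto simp: product_sigma_finite_def intro: measure_pmf.sigma_finite_measure_axioms)
  interpret M: prob_space ?M
    by (intro prob_space_PiM prob_space_measure_pmf)
  have singleton: "{x} = PiE I (\<lambda>i. {x i})" if "x \<in> ?F" for x
    using that by (auto simp: PiE_iff extensional_def fun_eq_iff) metis
  have sets_singleton: "{x} \<in> sets ?M" if "x \<in> ?F" for x
    using I by (simp add: singleton[OF that] sets_PiM_I_finite)
  have emeasure_singleton: "emeasure ?M {x} = ennreal ((1 / card Y) ^ card I)" if x: "x \<in> ?F" for x
  proof -
    have "emeasure ?M {x} = (\<Prod>i\<in>I. emeasure (measure_pmf (pmf_of_set Y)) {x i})"
      unfolding singleton[OF x] using I by (intro emeasure_PiM) auto
    also have "\<dots> = (\<Prod>i\<in>I. ennreal (1 / card Y))"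
      using x Y by (intro prod.cong refl) (auto simp: emeasure_pmf_of_set PiE_iff divide_ennreal)
    finally show ?thesis
      by (simp add: prod_ennreal ennreal_power)
  qed
  have F_sets: "?F \<in> sets ?M"
    using I by (simp add: sets_PiM_I_finite)
  have "emeasure ?M ?F = (\<Prod>i\<in>I. emeasure (measure_pmf (pmf_of_set Y)) Y)"
    using I by (intro emeasure_PiM) auto
  then have "AE x in ?M. x \<in> ?F"
    using Y F_sets by (intro M.AE_prob_1) (simp add: M.emeasure_eq_measure emeasure_pmf_of_set)
  then have "(\<integral>x. f x \<partial>?M) = (\<integral>x. f x * indicator ?F x \<partial>?M)"
    using f F_sets by (intro integral_cong_AE) auto
  also have "\<dots> = (\<Sum>x\<in>?F. f x * measure ?M {x})"
    using I Y sets_singleton emeasure_singleton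
    by (intro integral_indicator_finite_real) (auto simp: finite_PiE)
  also have "\<dots> = (\<Sum>x\<in>?F. f x) * (1 / card Y) ^ card I"
    using emeasure_singleton by (simp add: M.emeasure_eq_measure sum_distrib_right)
  also have "\<dots> = (\<Sum>x\<in>?F. f x) / card ?F"
    using I by (simp add: card_PiE field_simps)
  finally show ?thesis .
qed

lemma borel_measurable_PiM_component:
  assumes "sets N = sets borel" "i \<in> I"
  shows "(\<lambda>x. x i) \<in> borel_measurable (PiM I (\<lambda>_. N))"
  using measurable_component_singleton[OF assms(2), of "\<lambda>_. N"]
    measurable_cong_sets[OF refl assms(1), of "PiM I (\<lambda>_. N)"] by simp

lemma AE_pair_fst_ne:
  fixes N :: "real measure"
  assumes "sigma_finite_measure N" "sigma_finite_measure M"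
    and N: "sets N = sets borel" "\<And>a. emeasure N {a} = 0" and f: "f \<in> borel_measurable M"
  shows "AE z in N \<Otimes>\<^sub>M M. fst z \<noteq> f (snd z)"
proof -
  interpret pair_sigma_finite N M
    using assms(1,2) by (simp add: pair_sigma_finite_def)
  have sets: "{z \<in> space (N \<Otimes>\<^sub>M M). fst z \<noteq> f (snd z)} \<in> sets (N \<Otimes>\<^sub>M M)"
  proof -
    have "fst \<in> borel_measurable (N \<Otimes>\<^sub>M M)"
      using measurable_fst[of N M] measurable_cong_sets[OF refl N(1), of "N \<Otimes>\<^sub>M M"] by simp
    then have "{z \<in> space (N \<Otimes>\<^sub>M M). fst z = f (snd z)} \<in> sets (N \<Otimes>\<^sub>M M)"
      using f by (intro borel_measurable_eq measurable_compose[OF measurable_snd])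
    then show ?thesis
      by (rule sets.sets_Collect_neg)
  qed
  have "AE x in N. x \<noteq> y" for y
  proof -
    have "AE x in N. x \<notin> {y}"
      using N by (intro AE_not_in) (auto simp: null_sets_def)
    then show ?thesis
      by simp
  qed
  then have "AE y in M. AE x in N. x \<noteq> f y"
    by (rule AE_I2)
  then have "AE x in N. AE y in M. x \<noteq> f y"
    using AE_commute[OF sets] by simp
  then show ?thesis
    by (intro AE_pair_measure[OF sets]) simp
qed

lemma AE_PiM_component_ne:
  fixes N :: "real measure"
  assumes N: "prob_space N" "sets N = sets borel" "\<And>a. emeasure N {a} = 0"
    and I: "finite I" "i \<in> I" "j \<in> I" "i \<noteq> j"
  shows "AE e in PiM I (\<lambda>_. N). e i \<noteq> e j + c"
proof -
  let ?J = "I - {i}"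
  let ?upd = "\<lambda>(x, X). X(i := x)"
  have upd: "?upd \<in> N \<Otimes>\<^sub>M PiM ?J (\<lambda>_. N) \<rightarrow>\<^sub>M PiM I (\<lambda>_. N)"
  proof -
    have "(\<lambda>z. ?upd (snd z, fst z)) \<in> PiM ?J (\<lambda>_. N) \<Otimes>\<^sub>M N \<rightarrow>\<^sub>M PiM (insert i ?J) (\<lambda>_. N)"
      using measurable_add_dim[of i ?J "\<lambda>_. N"] by (simp add: case_prod_beta')
    from measurable_compose[OF measurable_pair_swap' this] show ?thesis
      using I(2) by (simp add: insert_absorb case_prod_beta')
  qed
  have "{e \<in> space (PiM I (\<lambda>_. N)). e i = e j + c} \<in> sets (PiM I (\<lambda>_. N))"
    using I N(2) by (intro borel_measurable_eq borel_measurable_add borel_measurable_const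
        borel_measurable_PiM_component)
  then have sets: "{e \<in> space (PiM I (\<lambda>_. N)). e i \<noteq> e j + c} \<in> sets (PiM I (\<lambda>_. N))"
    by (rule sets.sets_Collect_neg)
  have PiM_I: "distr (N \<Otimes>\<^sub>M PiM ?J (\<lambda>_. N)) (PiM I (\<lambda>_. N)) ?upd = PiM I (\<lambda>_. N)"
    using distr_pair_PiM_eq_PiM[of ?J "\<lambda>_. N" i] N(1) I(2) by (simp add: insert_absorb)
  have "AE z in N \<Otimes>\<^sub>M PiM ?J (\<lambda>_. N). fst z \<noteq> snd z j + c"
    using N I by (intro AE_pair_fst_ne prob_space_imp_sigma_finite prob_space_PiM borel_measurable_add
        borel_measurable_const borel_measurable_PiM_component) auto
  then have "AE z in N \<Otimes>\<^sub>M PiM ?J (\<lambda>_. N). ?upd z i \<noteq> ?upd z j + c"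
    using I(4) by (simp add: case_prod_beta')
  then show ?thesis
    using AE_distr_iff[OF upd sets] unfolding PiM_I by simp
qed

lemma AE_nested_pair_measure:
  assumes "sigma_finite_measure M1" "sigma_finite_measure M2" "sigma_finite_measure M3"
    and sets: "{z \<in> space (M1 \<Otimes>\<^sub>M (M2 \<Otimes>\<^sub>M M3)). P (fst z) (fst (snd z))} \<in> sets (M1 \<Otimes>\<^sub>M (M2 \<Otimes>\<^sub>M M3))"
    and ae: "\<And>x. x \<in> space M1 \<Longrightarrow> AE y in M2. P x y"
  shows "AE z in M1 \<Otimes>\<^sub>M (M2 \<Otimes>\<^sub>M M3). P (fst z) (fst (snd z))"
proof -
  interpret M23: pair_sigma_finite M2 M3
    using assms by (simp add: pair_sigma_finite_def)
  interpret M123: pair_sigma_finite M1 "M2 \<Otimes>\<^sub>M M3"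
    using assms(1) M23.P.sigma_finite_measure_axioms by (simp add: pair_sigma_finite_def)
  show ?thesis
  proof (rule M123.AE_pair_measure[OF sets], rule AE_I2)
    fix x assume x: "x \<in> space M1"
    have "Pair x -` {z \<in> space (M1 \<Otimes>\<^sub>M (M2 \<Otimes>\<^sub>M M3)). P (fst z) (fst (snd z))}
        = {w \<in> space (M2 \<Otimes>\<^sub>M M3). P x (fst w)}"
      using x by (auto simp: space_pair_measure)
    with sets_Pair1[OF sets, of x] have "{w \<in> space (M2 \<Otimes>\<^sub>M M3). P x (fst w)} \<in> sets (M2 \<Otimes>\<^sub>M M3)"
      by metis
    then show "AE w in M2 \<Otimes>\<^sub>M M3. P (fst (x, w)) (fst (snd (x, w)))"
      using ae[OF x] by (intro M23.AE_pair_measure) (auto intro: AE_I2)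
  qed
qed

lemma distr_PiM_permute:
  assumes "prob_space M" "\<sigma> permutes X"
  shows "distr (PiM X (\<lambda>_. M)) (PiM X (\<lambda>_. M)) (\<lambda>x. restrict (x \<circ> \<sigma>) X) = PiM X (\<lambda>_. M)"
  using distr_PiM_reindex[of X "\<lambda>_. M" \<sigma> X] assms permutes_inj_on[OF assms(2)] permutes_in_image[OF assms(2)]
  by (simp add: comp_def Pi_iff)

lemma measurable_PiM_permute:
  assumes "\<sigma> permutes X"
  shows "(\<lambda>x. restrict (x \<circ> \<sigma>) X) \<in> PiM X (\<lambda>_. M) \<rightarrow>\<^sub>M PiM X (\<lambda>_. M)"
  using permutes_in_image[OF assms] unfolding comp_def
  by (intro measurable_restrict measurable_component_singleton) auto

lemma distr_map_prod_eq:
  assumes "sigma_finite_measure N"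
    and f: "f \<in> M \<rightarrow>\<^sub>M M" "distr M M f = M" and g: "g \<in> N \<rightarrow>\<^sub>M N" "distr N N g = N"
  shows "distr (M \<Otimes>\<^sub>M N) (M \<Otimes>\<^sub>M N) (map_prod f g) = M \<Otimes>\<^sub>M N"
    and "map_prod f g \<in> M \<Otimes>\<^sub>M N \<rightarrow>\<^sub>M M \<Otimes>\<^sub>M N"
proof -
  have map_prod_eq: "map_prod f g = (\<lambda>(x, y). (f x, g y))"
    by (simp add: fun_eq_iff)
  show "distr (M \<Otimes>\<^sub>M N) (M \<Otimes>\<^sub>M N) (map_prod f g) = M \<Otimes>\<^sub>M N"
    using pair_measure_distr[OF f(1) g(1)] assms by (simp add: map_prod_eq)
  show "map_prod f g \<in> M \<Otimes>\<^sub>M N \<rightarrow>\<^sub>M M \<Otimes>\<^sub>M N"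
    unfolding map_prod_eq using f g by measurable
qed

lemma measure_eq_integral_mean_invariant:
  assumes "finite \<Sigma>" "\<Sigma> \<noteq> {}" "finite_measure M" "E \<in> sets M"
    and \<Phi>: "\<And>\<sigma>. \<sigma> \<in> \<Sigma> \<Longrightarrow> \<Phi> \<sigma> \<in> M \<rightarrow>\<^sub>M M" "\<And>\<sigma>. \<sigma> \<in> \<Sigma> \<Longrightarrow> distr M M (\<Phi> \<sigma>) = M"
  shows "measure M E = (\<integral>\<omega>. (\<Sum>\<sigma>\<in>\<Sigma>. indicator E (\<Phi> \<sigma> \<omega>)) / card \<Sigma> \<partial>M)"
proof -
  interpret finite_measure M
    by fact
  have "(\<integral>\<omega>. indicator E (\<Phi> \<sigma> \<omega>) \<partial>M) = measure M E" if "\<sigma> \<in> \<Sigma>" for \<sigma>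
  proof -
    have "(\<integral>\<omega>. indicator E (\<Phi> \<sigma> \<omega>) \<partial>M) = (\<integral>x. indicator E x \<partial>distr M M (\<Phi> \<sigma>) :: real)"
      using \<Phi>(1)[OF that] assms(4) by (intro integral_distr[symmetric]) auto
    also have "\<dots> = measure M (E \<inter> space M)"
      using \<Phi>(2)[OF that] by (simp add: Bochner_Integration.integral_indicator)
    finally show ?thesis
      using assms(4) by (simp add: sets.Int_space_eq2)
  qed
  moreover have "integrable M (\<lambda>\<omega>. indicator E (\<Phi> \<sigma> \<omega>) :: real)" if "\<sigma> \<in> \<Sigma>" for \<sigma>
    using measurable_compose[OF \<Phi>(1)[OF that] borel_measurable_indicator[OF assms(4)]]
    by (intro integrable_const_bound[where B=1]) auto
  ultimately show ?thesis
    using assms(1,2) by (simp add: integral_sum)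
qed

lemma integral_pair_snd:
  fixes f :: "'b \<Rightarrow> real"
  assumes "prob_space M" "sigma_finite_measure N" "f \<in> borel_measurable N"
  shows "(\<integral>z. f (snd z) \<partial>(M \<Otimes>\<^sub>M N)) = (\<integral>y. f y \<partial>N)"
proof -
  interpret M: prob_space M
    by fact
  interpret MN: pair_sigma_finite M N
    using assms by (simp add: pair_sigma_finite_def M.sigma_finite_measure_axioms)
  have "distr (M \<Otimes>\<^sub>M N) N snd = distr (N \<Otimes>\<^sub>M M) N (snd \<circ> (\<lambda>(x, y). (y, x)))"
    by (subst MN.distr_pair_swap) (simp add: distr_distr measurable_pair_swap')
  also have "\<dots> = N"
    using M.distr_pair_fst[of N] by (simp add: comp_def case_prod_beta')
  finally show ?thesis
    using integral_distr[OF measurable_snd assms(3), of M] by simp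
qed

section \<open>Exactness of the randomised Monte Carlo p-value\<close>

definition rand_pvalue :: "('a \<Rightarrow> real) \<Rightarrow> nat \<Rightarrow> real \<Rightarrow> (nat \<Rightarrow> 'a) \<Rightarrow> real \<Rightarrow> real" where
  "rand_pvalue g B t ps u =
     (real (card {b\<in>{1..B}. g (ps b) > t}) + u * (1 + real (card {b\<in>{1..B}. g (ps b) = t})))
       / (real B + 1)"

lemma p_multi_eq_rand_pvalue: "p_multi A I L B = rand_pvalue (G_supnorm A I L) B"
  by (simp add: fun_eq_iff p_multi_def rand_pvalue_def)

lemma borel_measurable_rand_pvalue:
  assumes "t \<in> borel_measurable M" "u \<in> borel_measurable M"
    and "\<And>b. b \<in> {1..B} \<Longrightarrow> (\<lambda>x. g (ps x b)) \<in> borel_measurable M"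
  shows "(\<lambda>x. rand_pvalue g B (t x) (ps x) (u x)) \<in> borel_measurable M"
proof -
  have card_sum: "real (card {b\<in>{1..B}. Q b}) = (\<Sum>b\<in>{1..B}. of_bool (Q b))" for Q
    by (simp add: Int_def conj_commute)
  note [measurable] = assms
  show ?thesis
    unfolding rand_pvalue_def card_sum by measurable
qed

lemma measure_uniform_01_lt:
  "measure (uniform_measure lborel {0..1::real}) {u. u < a} = min (max a 0) 1"
proof -
  have "measure (uniform_measure lborel {0..1::real}) {u. u < a} = measure lborel ({0..1} \<inter> {u. u < a})"
    by (subst measure_uniform_measure) auto
  also have "{0..1} \<inter> {u. u < a} = (if a \<le> 0 then {} else if a \<le> 1 then {0..<a} else {0..1})"
    by auto
  finally show ?thesis
    by simp
qed

lemma measure_uniform_01_affine_lt: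
  fixes K M d c :: real
  assumes "M > 0" "d > 0"
  shows "measure (uniform_measure lborel {0..1::real}) {u. (K + u * M) / d < c}
       = clipped_length (c * d) K M / M"
proof -
  have "{u. (K + u * M) / d < c} = {u. u < (c * d - K) / M}"
    using assms by (auto simp: field_simps)
  then have "measure (uniform_measure lborel {0..1::real}) {u. (K + u * M) / d < c}
      = min (max ((c * d - K) / M) 0) 1"
    by (simp only: measure_uniform_01_lt)
  then show ?thesis
    using assms unfolding clipped_length_def
    by (cases "c * d \<le> K"; cases "c * d \<le> K + M") (auto simp: min_def max_def field_simps)
qed

lemma measure_rand_pvalue_lt:
  fixes g :: "'a \<Rightarrow> real"
  shows "measure (uniform_measure lborel {0..1::real}) {u. rand_pvalue g B (g y) ps u < \<alpha>}
       = tie_share (\<alpha> * (real B + 1)) {0..B} (g \<circ> ps(0 := y)) 0"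
proof -
  have "{j\<in>{0..B}. (g \<circ> ps(0 := y)) j > (g \<circ> ps(0 := y)) 0} = {b\<in>{1..B}. g (ps b) > g y}"
    by (auto simp: Suc_le_eq intro!: gr0I)
  moreover have "{j\<in>{0..B}. (g \<circ> ps(0 := y)) j = (g \<circ> ps(0 := y)) 0} = insert 0 {b\<in>{1..B}. g (ps b) = g y}"
    by auto
  ultimately show ?thesis
    unfolding rand_pvalue_def tie_share_def
    by (subst measure_uniform_01_affine_lt) (auto simp: add_ac)
qed

lemma borel_measurable_mean_rand_pvalue_lt:
  fixes g :: "'a \<Rightarrow> real"
  shows "(\<lambda>z. (\<Sum>y\<in>Y. of_bool (rand_pvalue g B (g y) (fst z) (snd z) < \<alpha>)) / card Y)
           \<in> borel_measurable (PiM {1..B} (\<lambda>_. measure_pmf p) \<Otimes>\<^sub>M uniform_measure lborel {0..1::real})"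
proof -
  let ?M = "PiM {1..B} (\<lambda>_. measure_pmf p)"
  let ?U = "uniform_measure lborel {0..1::real}"
  have "(\<lambda>z. rand_pvalue g B t (fst z) (snd z)) \<in> borel_measurable (?M \<Otimes>\<^sub>M ?U)" for t
  proof (rule borel_measurable_rand_pvalue)
    show "snd \<in> borel_measurable (?M \<Otimes>\<^sub>M ?U)"
      using measurable_snd[of ?M ?U] measurable_cong_sets[OF refl, of ?U borel "?M \<Otimes>\<^sub>M ?U"]
      by simp
    show "(\<lambda>z. g (fst z b)) \<in> borel_measurable (?M \<Otimes>\<^sub>M ?U)" if "b \<in> {1..B}" for b
    proof -
      have "(\<lambda>z. fst z b) \<in> ?M \<Otimes>\<^sub>M ?U \<rightarrow>\<^sub>M measure_pmf p"
        using that by (intro measurable_compose[OF measurable_fst] measurable_component_singleton) auto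
      then show ?thesis
        by (rule measurable_compose) simp
    qed
  qed (rule borel_measurable_const)
  note [measurable] = this
  show ?thesis
    by measurable
qed

lemma integral_mean_rand_pvalue_lt:
  fixes g :: "'a \<Rightarrow> real"
  assumes "finite Y"
  shows "(\<integral>u. (\<Sum>y\<in>Y. of_bool (rand_pvalue g B (g y) ps u < \<alpha>)) / card Y \<partial>uniform_measure lborel {0..1})
       = (\<Sum>y\<in>Y. tie_share (\<alpha> * (real B + 1)) {0..B} (g \<circ> ps(0 := y)) 0) / card Y"
proof -
  let ?U = "uniform_measure lborel {0..1::real}"
  interpret U: prob_space ?U
    by (intro prob_space_uniform_measure) auto
  have "(\<lambda>u. rand_pvalue g B t ps u) \<in> borel_measurable ?U" for t
    by (rule borel_measurable_rand_pvalue) simp_all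
  then have "integrable ?U (\<lambda>u. of_bool (rand_pvalue g B t ps u < \<alpha>) :: real)" for t
    by (intro U.integrable_const_bound[where B=1]) auto
  then have "(\<integral>u. (\<Sum>y\<in>Y. of_bool (rand_pvalue g B (g y) ps u < \<alpha>)) / card Y \<partial>?U)
      = (\<Sum>y\<in>Y. \<integral>u. of_bool (rand_pvalue g B (g y) ps u < \<alpha>) \<partial>?U) / card Y"
    by (simp add: integral_sum)
  also have "\<dots> = (\<Sum>y\<in>Y. measure ?U {u. rand_pvalue g B (g y) ps u < \<alpha>}) / card Y"
    by (simp add: integral_of_bool)
  finally show ?thesis
    by (simp add: measure_rand_pvalue_lt)
qed

lemma rand_pvalue_exact:
  fixes g :: "'a \<Rightarrow> real"
  assumes Y: "finite Y" "Y \<noteq> {}" and \<alpha>: "0 \<le> \<alpha>" "\<alpha> \<le> 1"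
  shows "(\<integral>z. (\<Sum>y\<in>Y. of_bool (rand_pvalue g B (g y) (fst z) (snd z) < \<alpha>)) / card Y
           \<partial>(PiM {1..B} (\<lambda>_. measure_pmf (pmf_of_set Y)) \<Otimes>\<^sub>M uniform_measure lborel {0..1})) = \<alpha>"
proof -
  let ?M = "PiM {1..B} (\<lambda>_. measure_pmf (pmf_of_set Y))"
  let ?U = "uniform_measure lborel {0..1::real}"
  let ?f = "\<lambda>ps u. (\<Sum>y\<in>Y. of_bool (rand_pvalue g B (g y) ps u < \<alpha>)) / real (card Y)"
  let ?c = "\<alpha> * (real B + 1)"
  interpret U: prob_space ?U
    by (intro prob_space_uniform_measure) auto
  interpret MU: pair_prob_space ?M ?U
    by (intro pair_prob_space.intro pair_sigma_finite.intro prob_space_PiM prob_space_measure_pmf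
        prob_space_imp_sigma_finite U.prob_space_axioms)
  note f_meas = borel_measurable_mean_rand_pvalue_lt[where Y=Y and g=g and B=B and \<alpha>=\<alpha> and p="pmf_of_set Y"]
  have "integrable (?M \<Otimes>\<^sub>M ?U) (\<lambda>z. ?f (fst z) (snd z))"
    using f_meas Y by (intro MU.P.integrable_const_bound[where B=1])
      (auto simp: divide_le_eq_1 card_mono card_gt_0_iff)
  from MU.integral_fst'[OF this, symmetric]
  have "(\<integral>z. ?f (fst z) (snd z) \<partial>(?M \<Otimes>\<^sub>M ?U)) = (\<integral>ps. (\<integral>u. ?f ps u \<partial>?U) \<partial>?M)"
    by simp
  also have "\<dots> = (\<Sum>ps\<in>PiE {1..B} (\<lambda>_. Y). \<Sum>y\<in>Y. tie_share ?c {0..B} (g \<circ> ps(0 := y)) 0)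
                    / card Y / card (PiE {1..B} (\<lambda>_. Y))"
  proof -
    have "(\<lambda>ps. \<integral>u. ?f ps u \<partial>?U) \<in> borel_measurable ?M"
      using f_meas by (intro U.borel_measurable_lebesgue_integral) (simp add: case_prod_beta')
    from integral_PiM_pmf_of_set[OF finite_atLeastAtMost Y this] show ?thesis
      unfolding integral_mean_rand_pvalue_lt[OF Y(1)] by (simp add: sum_divide_distrib)
  qed
  also have "\<dots> = (\<Sum>x\<in>PiE {0..B} (\<lambda>_. Y). tie_share ?c {0..B} (g \<circ> x) 0)
                    / card Y / card (PiE {1..B} (\<lambda>_. Y))"
    using sum_PiE_insert[of 0 "{1..B}" "\<lambda>x. tie_share ?c {0..B} (g \<circ> x) 0" "\<lambda>_. Y"]
    by (simp add: atLeastAtMost_insertL)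
  also have "\<dots> = \<alpha>"
    using Y by (simp add: sum_PiE_tie_share_eq[OF \<alpha>] card_PiE card_gt_0_iff)
  finally show ?thesis
    by simp
qed

section \<open>Statistics that depend only on the order pattern\<close>

definition order_pattern :: "(nat \<Rightarrow> 'a::linorder) \<Rightarrow> nat set \<Rightarrow> (nat \<times> nat) set" where
  "order_pattern s X = {(i, j) \<in> X \<times> X. s i \<le> s j}"

text \<open>Both \<open>T_multi\<close> and \<open>G_supnorm\<close> factor through the order pattern, which takes only
  finitely many values.\<close>

definition pattern_stat :: "(nat list \<Rightarrow> real) \<Rightarrow> (nat \<Rightarrow> nat set) \<Rightarrow> nat \<Rightarrow> (nat \<times> nat) set \<Rightarrow> real"
  where "pattern_stat A I L R =
    Max ((\<lambda>l. A (map (\<lambda>i. card {j \<in> I l. (j, i) \<in> R}) (sorted_list_of_set (I l)))) ` {1..L})"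

lemma local_stat_eq_order_pattern:
  assumes "J \<subseteq> X" "finite J"
  shows "local_stat A s J = A (map (\<lambda>i. card {j \<in> J. (j, i) \<in> order_pattern s X}) (sorted_list_of_set J))"
  unfolding local_stat_def local_rank_def order_pattern_def
  using assms by (intro arg_cong[where f=A] map_cong refl arg_cong[where f=card]) auto

lemma T_multi_eq_pattern_stat:
  assumes "\<forall>l\<in>{1..L}. I l \<subseteq> X" "finite X"
  shows "T_multi A I L s = pattern_stat A I L (order_pattern s X)"
proof -
  have "I l \<subseteq> X \<and> finite (I l)" if "l \<in> {1..L}" for l
    using assms that finite_subset by blast
  then show ?thesis
    unfolding T_multi_def pattern_stat_def
    by (intro arg_cong[where f=Max] image_cong refl local_stat_eq_order_pattern) auto
qed

lemma G_supnorm_eq_pattern_stat: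
  assumes "\<forall>r. A r \<ge> 0" "\<forall>l\<in>{1..L}. I l \<subseteq> X" "finite X"
  shows "G_supnorm A I L \<pi> = pattern_stat A I L (order_pattern \<pi> X)"
proof -
  have "I l \<subseteq> X \<and> finite (I l)" if "l \<in> {1..L}" for l
    using assms that finite_subset by blast
  moreover have "local_stat A \<pi> J \<ge> 0" for J
    using assms by (simp add: local_stat_def)
  ultimately show ?thesis
    unfolding G_supnorm_def G_def pattern_stat_def
    by (intro arg_cong[where f=Max] image_cong refl) (simp add: local_stat_eq_order_pattern)
qed

lemma order_pattern_cong: "(\<And>i. i \<in> X \<Longrightarrow> s i = s' i) \<Longrightarrow> order_pattern s X = order_pattern s' X"
  by (auto simp: order_pattern_def)

lemma order_pattern_comp_permutes:
  assumes "\<sigma> permutes X"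
  shows "order_pattern (s \<circ> \<sigma>) X = {(i, j). (\<sigma> i, \<sigma> j) \<in> order_pattern s X}"
  using assms by (auto simp: order_pattern_def permutes_in_image)

lemma measurable_order_pattern:
  fixes s :: "'x \<Rightarrow> nat \<Rightarrow> real"
  assumes "finite X" and s: "\<And>i. i \<in> X \<Longrightarrow> (\<lambda>x. s x i) \<in> borel_measurable M"
  shows "(\<lambda>x. order_pattern (s x) X) \<in> M \<rightarrow>\<^sub>M count_space (Pow (X \<times> X))"
proof (subst measurable_count_space_eq2)
  show "finite (Pow (X \<times> X))"
    using assms by simp
  show "(\<lambda>x. order_pattern (s x) X) \<in> space M \<rightarrow> Pow (X \<times> X) \<and>
    (\<forall>R\<in>Pow (X \<times> X). (\<lambda>x. order_pattern (s x) X) -` {R} \<inter> space M \<in> sets M)"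
  proof safe
    fix R assume R: "R \<subseteq> X \<times> X"
    have "(\<lambda>x. order_pattern (s x) X) -` {R} \<inter> space M
        = {x \<in> space M. \<forall>i\<in>X. \<forall>j\<in>X. (s x i \<le> s x j) = ((i, j) \<in> R)}"
      using R by (auto simp: order_pattern_def)
    also have "\<dots> \<in> sets M"
    proof (intro sets.sets_Collect_finite_All \<open>finite X\<close>)
      fix i j assume "i \<in> X" "j \<in> X"
      note [measurable] = s[OF this(1)] s[OF this(2)]
      show "{x \<in> space M. (s x i \<le> s x j) = ((i, j) \<in> R)} \<in> sets M"
        by measurable
    qed
    finally show "(\<lambda>x. order_pattern (s x) X) -` {R} \<inter> space M \<in> sets M" .
  qed (auto simp: order_pattern_def)
qed

lemma borel_measurable_T_multi:
  fixes s :: "'x \<Rightarrow> nat \<Rightarrow> real"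
  assumes "\<forall>l\<in>{1..L}. I l \<subseteq> X" "finite X"
    and "\<And>i. i \<in> X \<Longrightarrow> (\<lambda>x. s x i) \<in> borel_measurable M"
  shows "(\<lambda>x. T_multi A I L (s x)) \<in> borel_measurable M"
proof -
  have "(\<lambda>x. pattern_stat A I L (order_pattern (s x) X)) \<in> borel_measurable M"
    using measurable_order_pattern[of X s M] assms by (auto intro: measurable_compose)
  then show ?thesis
    using assms(1,2) by (simp add: T_multi_eq_pattern_stat)
qed

text \<open>Outside {1..n} the rank map is the identity, so that it permutes {1..n} when s is injective
  there.\<close>

definition rank_perm :: "(nat \<Rightarrow> 'a::linorder) \<Rightarrow> nat \<Rightarrow> nat \<Rightarrow> nat" where
  "rank_perm s n i = (if i \<in> {1..n} then card {k\<in>{1..n}. s k \<le> s i} else i)"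

lemma rank_perm_le_iff:
  assumes "i \<in> {1..n}" "j \<in> {1..n}"
  shows "rank_perm s n i \<le> rank_perm s n j \<longleftrightarrow> s i \<le> s j"
proof
  assume "s i \<le> s j"
  then have "{k\<in>{1..n}. s k \<le> s i} \<subseteq> {k\<in>{1..n}. s k \<le> s j}"
    by auto
  then show "rank_perm s n i \<le> rank_perm s n j"
    using assms by (simp add: rank_perm_def card_mono)
next
  assume le: "rank_perm s n i \<le> rank_perm s n j"
  show "s i \<le> s j"
  proof (rule ccontr)
    assume "\<not> s i \<le> s j"
    then have "{k\<in>{1..n}. s k \<le> s j} \<subset> {k\<in>{1..n}. s k \<le> s i}"
      using assms by auto
    then have "card {k\<in>{1..n}. s k \<le> s j} < card {k\<in>{1..n}. s k \<le> s i}"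
      by (intro psubset_card_mono) auto
    then show False
      using le assms by (simp add: rank_perm_def)
  qed
qed

lemma order_pattern_rank_perm: "order_pattern (rank_perm s n) {1..n} = order_pattern s {1..n}"
  by (auto simp: order_pattern_def rank_perm_le_iff)

lemma rank_perm_permutes:
  assumes "inj_on s {1..n}"
  shows "rank_perm s n permutes {1..n}"
proof (rule bij_imp_permutes)
  have "rank_perm s n i \<in> {1..n}" if "i \<in> {1..n}" for i
  proof -
    have "i \<in> {k\<in>{1..n}. s k \<le> s i}"
      using that by simp
    then have "card {k\<in>{1..n}. s k \<le> s i} \<ge> 1"
      by (auto simp: Suc_le_eq card_gt_0_iff)
    moreover have "card {k\<in>{1..n}. s k \<le> s i} \<le> n"
      using card_mono[of "{1..n}" "{k\<in>{1..n}. s k \<le> s i}"] by fastforce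
    ultimately show ?thesis
      using that by (simp add: rank_perm_def)
  qed
  moreover have "inj_on (rank_perm s n) {1..n}"
  proof (rule inj_onI)
    fix i j assume "i \<in> {1..n}" "j \<in> {1..n}" "rank_perm s n i = rank_perm s n j"
    then have "s i = s j"
      using rank_perm_le_iff[of i n j s] rank_perm_le_iff[of j n i s] by simp
    then show "i = j"
      using assms \<open>i \<in> {1..n}\<close> \<open>j \<in> {1..n}\<close> by (simp add: inj_on_eq_iff)
  qed
  ultimately show "bij_betw (rank_perm s n) {1..n} {1..n}"
    by (simp add: bij_betw_def endo_inj_surj image_subset_iff)
qed (auto simp: rank_perm_def)

lemma sum_permutations_T_multi_eq_G_supnorm:
  fixes s :: "nat \<Rightarrow> real"
  assumes "inj_on s {1..n}" "\<forall>r. A r \<ge> 0" "\<forall>l\<in>{1..L}. I l \<subseteq> {1..n}"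
  shows "(\<Sum>\<sigma> | \<sigma> permutes {1..n}. f (T_multi A I L (s \<circ> \<sigma>)))
       = (\<Sum>\<pi> | \<pi> permutes {1..n}. f (G_supnorm A I L \<pi>))"
proof -
  let ?r = "rank_perm s n"
  have "(\<Sum>\<pi> | \<pi> permutes {1..n}. f (G_supnorm A I L \<pi>))
      = (\<Sum>\<sigma> | \<sigma> permutes {1..n}. f (G_supnorm A I L (?r \<circ> \<sigma>)))"
    using assms(1) by (intro setum_permutations_compose_left rank_perm_permutes)
  also have "\<dots> = (\<Sum>\<sigma> | \<sigma> permutes {1..n}. f (T_multi A I L (s \<circ> \<sigma>)))"
  proof (intro sum.cong refl)
    fix \<sigma> assume "\<sigma> \<in> {\<sigma>. \<sigma> permutes {1..n}}"
    then have "order_pattern (?r \<circ> \<sigma>) {1..n} = order_pattern (s \<circ> \<sigma>) {1..n}"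
      unfolding mem_Collect_eq by (simp only: order_pattern_comp_permutes order_pattern_rank_perm)
    then show "f (G_supnorm A I L (?r \<circ> \<sigma>)) = f (T_multi A I L (s \<circ> \<sigma>))"
      using assms(2,3) by (simp add: G_supnorm_eq_pattern_stat T_multi_eq_pattern_stat)
  qed
  finally show ?thesis ..
qed

section \<open>Scores of exchangeable data\<close>

lemma prob_space_std_normal_measure: "prob_space std_normal_measure"
  unfolding std_normal_measure_def by (rule prob_space_normal_density) simp

lemma sets_std_normal_measure [simp]: "sets std_normal_measure = sets borel"
  by (simp add: std_normal_measure_def)

lemma emeasure_std_normal_measure_singleton: "emeasure std_normal_measure {a} = 0"
proof -
  have "AE x in lborel. x \<in> {a} \<longrightarrow> ennreal (std_normal_density x) = 0"
    using AE_lborel_singleton[of a] by eventually_elim simp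
  then have "{a} \<in> null_sets std_normal_measure"
    unfolding std_normal_measure_def by (subst null_sets_density_iff) auto
  then show ?thesis
    by auto
qed

lemma borel_measurable_score:
  assumes S: "(\<lambda>(z, d). S z d) \<in> P \<Otimes>\<^sub>M PiM {1..n} (\<lambda>_. P) \<rightarrow>\<^sub>M borel" and i: "i \<in> {1..n}"
  shows "(\<lambda>\<omega>. score S \<epsilon> (fst \<omega>) (fst (snd \<omega>)) i)
           \<in> borel_measurable (PiM {1..n} (\<lambda>_. P) \<Otimes>\<^sub>M (PiM {1..n} (\<lambda>_. std_normal_measure) \<Otimes>\<^sub>M R))"
proof -
  let ?\<Omega> = "PiM {1..n} (\<lambda>_. P) \<Otimes>\<^sub>M (PiM {1..n} (\<lambda>_. std_normal_measure) \<Otimes>\<^sub>M R)"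
  have "(\<lambda>\<omega>. (fst \<omega> i, fst \<omega>)) \<in> ?\<Omega> \<rightarrow>\<^sub>M P \<Otimes>\<^sub>M PiM {1..n} (\<lambda>_. P)"
    using i by (intro measurable_Pair measurable_compose[OF measurable_fst measurable_component_singleton]
        measurable_fst) auto
  from measurable_compose[OF this S] have "(\<lambda>\<omega>. S (fst \<omega> i) (fst \<omega>)) \<in> borel_measurable ?\<Omega>"
    by simp
  moreover have "(\<lambda>\<omega>. fst (snd \<omega>) i) \<in> borel_measurable ?\<Omega>"
    using i by (intro measurable_compose[OF measurable_snd] measurable_compose[OF measurable_fst]
        borel_measurable_PiM_component) auto
  ultimately show ?thesis
    unfolding score_def by measurable
qed

lemma AE_inj_on_score:
  fixes S :: "'z \<Rightarrow> (nat \<Rightarrow> 'z) \<Rightarrow> real"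
  assumes P: "prob_space P" and R: "sigma_finite_measure R" and "\<epsilon> > 0"
    and S: "(\<lambda>(z, d). S z d) \<in> P \<Otimes>\<^sub>M PiM {1..n} (\<lambda>_. P) \<rightarrow>\<^sub>M borel"
  shows "AE \<omega> in PiM {1..n} (\<lambda>_. P) \<Otimes>\<^sub>M (PiM {1..n} (\<lambda>_. std_normal_measure) \<Otimes>\<^sub>M R).
           inj_on (score S \<epsilon> (fst \<omega>) (fst (snd \<omega>))) {1..n}"
proof (rule AE_nested_pair_measure)
  let ?\<Omega> = "PiM {1..n} (\<lambda>_. P) \<Otimes>\<^sub>M (PiM {1..n} (\<lambda>_. std_normal_measure) \<Otimes>\<^sub>M R)"
  show "sigma_finite_measure (PiM {1..n} (\<lambda>_. P))" "sigma_finite_measure (PiM {1..n} (\<lambda>_. std_normal_measure))"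
    using P prob_space_std_normal_measure by (auto intro!: prob_space_imp_sigma_finite prob_space_PiM)
  show "sigma_finite_measure R"
    by (fact R)
  have "{\<omega> \<in> space ?\<Omega>. score S \<epsilon> (fst \<omega>) (fst (snd \<omega>)) i = score S \<epsilon> (fst \<omega>) (fst (snd \<omega>)) j \<longrightarrow> i = j}
      \<in> sets ?\<Omega>" if "i \<in> {1..n}" "j \<in> {1..n}" for i j
  proof (cases "i = j")
    case False
    have "{\<omega> \<in> space ?\<Omega>. score S \<epsilon> (fst \<omega>) (fst (snd \<omega>)) i = score S \<epsilon> (fst \<omega>) (fst (snd \<omega>)) j} \<in> sets ?\<Omega>"
      using that by (intro borel_measurable_eq borel_measurable_score[OF S])
    then show ?thesis
      using False by (simp add: sets.sets_Collect_neg)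
  qed simp
  then show "{\<omega> \<in> space ?\<Omega>. inj_on (score S \<epsilon> (fst \<omega>) (fst (snd \<omega>))) {1..n}} \<in> sets ?\<Omega>"
    unfolding inj_on_def by (intro sets.sets_Collect_finite_All finite_atLeastAtMost)
  fix D
  have "AE e in PiM {1..n} (\<lambda>_. std_normal_measure). score S \<epsilon> D e i = score S \<epsilon> D e j \<longrightarrow> i = j"
    if "i \<in> {1..n}" "j \<in> {1..n}" for i j
  proof (cases "i = j")
    case False
    have "AE e in PiM {1..n} (\<lambda>_. std_normal_measure). e i \<noteq> e j + (S (D j) D - S (D i) D) / \<epsilon>"
      using that False
      by (intro AE_PiM_component_ne prob_space_std_normal_measure emeasure_std_normal_measure_singleton) auto
    then show ?thesis
    proof (rule eventually_mono)
      fix e assume "e i \<noteq> e j + (S (D j) D - S (D i) D) / \<epsilon>"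
      then show "score S \<epsilon> D e i = score S \<epsilon> D e j \<longrightarrow> i = j"
        using \<open>\<epsilon> > 0\<close> by (auto simp: score_def field_simps)
    qed
  qed simp
  then show "AE e in PiM {1..n} (\<lambda>_. std_normal_measure). inj_on (score S \<epsilon> D e) {1..n}"
    unfolding inj_on_def by (intro AE_finite_allI finite_atLeastAtMost)
qed

lemma score_permute:
  fixes S :: "'z \<Rightarrow> (nat \<Rightarrow> 'z) \<Rightarrow> real"
  assumes sym: "\<forall>z \<in> space P. \<forall>d \<in> space (PiM {1..n} (\<lambda>_. P)). \<forall>\<pi>.
           \<pi> permutes {1..n} \<longrightarrow> S z (d \<circ> \<pi>) = S z d"
    and \<sigma>: "\<sigma> permutes {1..n}" and D: "D \<in> space (PiM {1..n} (\<lambda>_. P))" and i: "i \<in> {1..n}"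
  shows "score S \<epsilon> (restrict (D \<circ> \<sigma>) {1..n}) (restrict (e \<circ> \<sigma>) {1..n}) i = score S \<epsilon> D e (\<sigma> i)"
proof -
  have "restrict (D \<circ> \<sigma>) {1..n} = D \<circ> \<sigma>"
    using D permutes_not_in[OF \<sigma>] by (auto simp: fun_eq_iff space_PiM PiE_def extensional_def)
  moreover have "D (\<sigma> i) \<in> space P"
    using D permutes_in_image[OF \<sigma>] i by (auto simp: space_PiM)
  ultimately show ?thesis
    using sym D \<sigma> i by (simp add: score_def)
qed

lemma T_multi_score_permute:
  fixes S :: "'z \<Rightarrow> (nat \<Rightarrow> 'z) \<Rightarrow> real"
  assumes "\<forall>l\<in>{1..L}. I l \<subseteq> {1..n}"
    and "\<forall>z \<in> space P. \<forall>d \<in> space (PiM {1..n} (\<lambda>_. P)). \<forall>\<pi>.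
           \<pi> permutes {1..n} \<longrightarrow> S z (d \<circ> \<pi>) = S z d"
    and "\<sigma> permutes {1..n}" "D \<in> space (PiM {1..n} (\<lambda>_. P))"
  shows "T_multi A I L (score S \<epsilon> (restrict (D \<circ> \<sigma>) {1..n}) (restrict (e \<circ> \<sigma>) {1..n}))
       = T_multi A I L (score S \<epsilon> D e \<circ> \<sigma>)"
proof -
  have "order_pattern (score S \<epsilon> (restrict (D \<circ> \<sigma>) {1..n}) (restrict (e \<circ> \<sigma>) {1..n})) {1..n}
      = order_pattern (score S \<epsilon> D e \<circ> \<sigma>) {1..n}"
  proof (rule order_pattern_cong)
    fix i assume "i \<in> {1..n}"
    from score_permute[OF assms(2-4) this]
    show "score S \<epsilon> (restrict (D \<circ> \<sigma>) {1..n}) (restrict (e \<circ> \<sigma>) {1..n}) i = (score S \<epsilon> D e \<circ> \<sigma>) i"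
      by (simp only: comp_apply)
  qed
  then show ?thesis
    using assms(1) by (simp add: T_multi_eq_pattern_stat)
qed

lemma sum_permutations_T_multi_score:
  fixes S :: "'z \<Rightarrow> (nat \<Rightarrow> 'z) \<Rightarrow> real"
  assumes "\<forall>z \<in> space P. \<forall>d \<in> space (PiM {1..n} (\<lambda>_. P)). \<forall>\<pi>.
           \<pi> permutes {1..n} \<longrightarrow> S z (d \<circ> \<pi>) = S z d"
    and "\<forall>r. A r \<ge> 0" "\<forall>l\<in>{1..L}. I l \<subseteq> {1..n}"
    and "D \<in> space (PiM {1..n} (\<lambda>_. P))" "inj_on (score S \<epsilon> D e) {1..n}"
  shows "(\<Sum>\<sigma> | \<sigma> permutes {1..n}.
            f (T_multi A I L (score S \<epsilon> (restrict (D \<circ> \<sigma>) {1..n}) (restrict (e \<circ> \<sigma>) {1..n}))))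
       = (\<Sum>\<pi> | \<pi> permutes {1..n}. f (G_supnorm A I L \<pi>))"
proof -
  have "(\<Sum>\<sigma> | \<sigma> permutes {1..n}.
            f (T_multi A I L (score S \<epsilon> (restrict (D \<circ> \<sigma>) {1..n}) (restrict (e \<circ> \<sigma>) {1..n}))))
      = (\<Sum>\<sigma> | \<sigma> permutes {1..n}. f (T_multi A I L (score S \<epsilon> D e \<circ> \<sigma>)))"
  proof (rule sum.cong[OF refl])
    fix \<sigma> assume "\<sigma> \<in> {\<sigma>. \<sigma> permutes {1..n}}"
    then have "\<sigma> permutes {1..n}"
      by simp
    from T_multi_score_permute[OF assms(3,1) this assms(4)]
    show "f (T_multi A I L (score S \<epsilon> (restrict (D \<circ> \<sigma>) {1..n}) (restrict (e \<circ> \<sigma>) {1..n})))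
        = f (T_multi A I L (score S \<epsilon> D e \<circ> \<sigma>))"
      by (rule arg_cong)
  qed
  also have "\<dots> = (\<Sum>\<pi> | \<pi> permutes {1..n}. f (G_supnorm A I L \<pi>))"
    using assms(5,2,3) by (rule sum_permutations_T_multi_eq_G_supnorm)
  finally show ?thesis .
qed

lemma prob_space_perms_uniform:
  "prob_space (PiM {1..B} (\<lambda>_. perm_measure n) \<Otimes>\<^sub>M uniform_measure lborel {0..1::real})"
  unfolding perm_measure_def
  by (intro prob_space_pair prob_space_PiM prob_space_measure_pmf prob_space_uniform_measure) auto

lemma prob_space_joint_measure:
  assumes "prob_space P"
  shows "prob_space (joint_measure P n B)"
  unfolding joint_measure_def
  by (intro prob_space_pair prob_space_PiM assms prob_space_std_normal_measure prob_space_perms_uniform)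

lemma joint_measure_permute:
  assumes "prob_space P" "\<sigma> permutes {1..n}"
  defines "\<Phi> \<equiv> map_prod (\<lambda>D. restrict (D \<circ> \<sigma>) {1..n}) (map_prod (\<lambda>e. restrict (e \<circ> \<sigma>) {1..n}) id)"
  shows "distr (joint_measure P n B) (joint_measure P n B) \<Phi> = joint_measure P n B"
    and "\<Phi> \<in> joint_measure P n B \<rightarrow>\<^sub>M joint_measure P n B"
proof -
  let ?R = "PiM {1..B} (\<lambda>_. perm_measure n) \<Otimes>\<^sub>M uniform_measure lborel {0..1::real}"
  let ?N = "PiM {1..n} (\<lambda>_. std_normal_measure)"
  interpret R: prob_space ?R
    by (rule prob_space_perms_uniform)
  interpret NR: prob_space "?N \<Otimes>\<^sub>M ?R"
    by (intro prob_space_pair prob_space_PiM prob_space_std_normal_measure R.prob_space_axioms)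
  have id: "id \<in> ?R \<rightarrow>\<^sub>M ?R" "distr ?R ?R id = ?R"
    by (simp_all add: distr_id2 id_def)
  note inner = distr_map_prod_eq[OF R.sigma_finite_measure_axioms
      measurable_PiM_permute[OF assms(2)] distr_PiM_permute[OF prob_space_std_normal_measure assms(2)] id]
  show "distr (joint_measure P n B) (joint_measure P n B) \<Phi> = joint_measure P n B"
    "\<Phi> \<in> joint_measure P n B \<rightarrow>\<^sub>M joint_measure P n B"
    unfolding joint_measure_def \<Phi>_def
    using distr_map_prod_eq[OF NR.sigma_finite_measure_axioms
      measurable_PiM_permute[OF assms(2)] distr_PiM_permute[OF assms(1,2)] inner(2,1)] by simp_all
qed

lemma borel_measurable_p_multi_joint:
  assumes S: "(\<lambda>(z, d). S z d) \<in> P \<Otimes>\<^sub>M PiM {1..n} (\<lambda>_. P) \<rightarrow>\<^sub>M borel"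
    and I: "\<forall>l\<in>{1..L}. I l \<subseteq> {1..n}"
  shows "(\<lambda>\<omega>. p_multi A I L B (T_multi A I L (score S \<epsilon> (fst \<omega>) (fst (snd \<omega>))))
            (fst (snd (snd \<omega>))) (snd (snd (snd \<omega>)))) \<in> borel_measurable (joint_measure P n B)"
  unfolding p_multi_eq_rand_pvalue
proof (rule borel_measurable_rand_pvalue)
  show "(\<lambda>\<omega>. T_multi A I L (score S \<epsilon> (fst \<omega>) (fst (snd \<omega>)))) \<in> borel_measurable (joint_measure P n B)"
    using I unfolding joint_measure_def std_normal_measure_def[symmetric]
    by (intro borel_measurable_T_multi[where X="{1..n}"] borel_measurable_score[OF S]) auto
  show "(\<lambda>\<omega>. snd (snd (snd \<omega>))) \<in> borel_measurable (joint_measure P n B)"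
    unfolding joint_measure_def
    using measurable_cong_sets[OF refl sets_uniform_measure, of _ lborel "{0..1::real}"]
    by (auto intro!: measurable_compose[OF measurable_snd])
  show "(\<lambda>\<omega>. G_supnorm A I L (fst (snd (snd \<omega>)) b)) \<in> borel_measurable (joint_measure P n B)"
    if "b \<in> {1..B}" for b
    unfolding joint_measure_def perm_measure_def using that
    by (intro measurable_compose[OF measurable_compose[OF measurable_snd
          measurable_compose[OF measurable_snd measurable_fst]] measurable_compose[OF measurable_component_singleton]])
      auto
qed

lemma integral_joint_measure_snd_snd:
  fixes f :: "(nat \<Rightarrow> nat \<Rightarrow> nat) \<times> real \<Rightarrow> real"
  assumes "prob_space P"
    and f: "f \<in> borel_measurable (PiM {1..B} (\<lambda>_. perm_measure n) \<Otimes>\<^sub>M uniform_measure lborel {0..1})"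
  shows "(\<integral>\<omega>. f (snd (snd \<omega>)) \<partial>joint_measure P n B)
       = (\<integral>z. f z \<partial>(PiM {1..B} (\<lambda>_. perm_measure n) \<Otimes>\<^sub>M uniform_measure lborel {0..1}))"
proof -
  let ?N = "PiM {1..n} (\<lambda>_. std_normal_measure)"
  let ?R = "PiM {1..B} (\<lambda>_. perm_measure n) \<Otimes>\<^sub>M uniform_measure lborel {0..1::real}"
  have "prob_space (?N \<Otimes>\<^sub>M ?R)"
    by (intro prob_space_pair prob_space_PiM prob_space_std_normal_measure prob_space_perms_uniform)
  then have "(\<integral>\<omega>. f (snd (snd \<omega>)) \<partial>joint_measure P n B) = (\<integral>y. f (snd y) \<partial>(?N \<Otimes>\<^sub>M ?R))"
    unfolding joint_measure_def using f
    by (intro integral_pair_snd prob_space_PiM assms(1) prob_space_imp_sigma_finite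
        measurable_compose[OF measurable_snd])
  also have "\<dots> = (\<integral>z. f z \<partial>?R)"
    using f by (intro integral_pair_snd prob_space_PiM prob_space_std_normal_measure
        prob_space_imp_sigma_finite prob_space_perms_uniform)
  finally show ?thesis .
qed

lemma measure_p_multi_lt_eq_mean:
  fixes S :: "'z \<Rightarrow> (nat \<Rightarrow> 'z) \<Rightarrow> real"
  assumes P: "prob_space P"
    and S: "(\<lambda>(z, d). S z d) \<in> P \<Otimes>\<^sub>M PiM {1..n} (\<lambda>_. P) \<rightarrow>\<^sub>M borel"
    and sym: "\<forall>z \<in> space P. \<forall>d \<in> space (PiM {1..n} (\<lambda>_. P)). \<forall>\<pi>.
           \<pi> permutes {1..n} \<longrightarrow> S z (d \<circ> \<pi>) = S z d"
    and "\<epsilon> > 0" and A: "\<forall>r. A r \<ge> 0" and I: "\<forall>l\<in>{1..L}. I l \<subseteq> {1..n}"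
  shows "measure (joint_measure P n B)
           {(D, e, perms, U) \<in> space (joint_measure P n B).
              p_multi A I L B (T_multi A I L (score S \<epsilon> D e)) perms U < \<alpha>}
       = (\<integral>\<omega>. (\<Sum>\<pi> | \<pi> permutes {1..n}.
              of_bool (p_multi A I L B (G_supnorm A I L \<pi>) (fst (snd (snd \<omega>))) (snd (snd (snd \<omega>))) < \<alpha>))
            / card {\<pi>. \<pi> permutes {1..n}} \<partial>joint_measure P n B)"
proof -
  let ?\<Omega> = "joint_measure P n B"
  let ?\<Pi> = "{\<pi>. \<pi> permutes {1..n}}"
  let ?s = "\<lambda>\<omega>. score S \<epsilon> (fst \<omega>) (fst (snd \<omega>))"
  let ?lt = "\<lambda>t \<omega>. p_multi A I L B t (fst (snd (snd \<omega>))) (snd (snd (snd \<omega>))) < \<alpha>"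
  define E where "E = {\<omega> \<in> space ?\<Omega>. ?lt (T_multi A I L (?s \<omega>)) \<omega>}"
  define \<Phi> where "\<Phi> \<sigma> = map_prod (\<lambda>D :: nat \<Rightarrow> 'z. restrict (D \<circ> \<sigma>) {1..n})
    (map_prod (\<lambda>e :: nat \<Rightarrow> real. restrict (e \<circ> \<sigma>) {1..n}) (id :: (nat \<Rightarrow> nat \<Rightarrow> nat) \<times> real \<Rightarrow> _))"
    for \<sigma> :: "nat \<Rightarrow> nat"
  interpret prob_space ?\<Omega>
    using P by (rule prob_space_joint_measure)
  have \<Pi>: "finite ?\<Pi>" "?\<Pi> \<noteq> {}"
    using finite_permutations[of "{1..n}"] permutes_id[of "{1..n}"] by blast+
  have E: "E \<in> sets ?\<Omega>"
    unfolding E_def using borel_measurable_p_multi_joint[OF S I] by measurable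
  have \<Phi>: "\<Phi> \<sigma> \<in> ?\<Omega> \<rightarrow>\<^sub>M ?\<Omega>" "distr ?\<Omega> ?\<Omega> (\<Phi> \<sigma>) = ?\<Omega>" if "\<sigma> \<in> ?\<Pi>" for \<sigma>
    using joint_measure_permute[OF P] that by (simp_all add: \<Phi>_def)
  have "measure ?\<Omega> E = (\<integral>\<omega>. (\<Sum>\<sigma>\<in>?\<Pi>. indicator E (\<Phi> \<sigma> \<omega>)) / card ?\<Pi> \<partial>?\<Omega>)"
    using \<Pi> E \<Phi> by (intro measure_eq_integral_mean_invariant) (auto intro: finite_measure_axioms)
  also have "\<dots> = (\<integral>\<omega>. (\<Sum>\<pi>\<in>?\<Pi>. of_bool (?lt (G_supnorm A I L \<pi>) \<omega>)) / card ?\<Pi> \<partial>?\<Omega>)"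
  proof (rule integral_cong_AE)
    show "(\<lambda>\<omega>. (\<Sum>\<sigma>\<in>?\<Pi>. indicator E (\<Phi> \<sigma> \<omega>)) / card ?\<Pi>) \<in> borel_measurable ?\<Omega>"
      using \<Phi>(1) E
      by (auto intro!: borel_measurable_divide borel_measurable_sum
          measurable_compose[OF _ borel_measurable_indicator])
    have "(\<lambda>\<omega>. snd (snd \<omega>)) \<in> ?\<Omega> \<rightarrow>\<^sub>M
        PiM {1..B} (\<lambda>_. measure_pmf (pmf_of_set ?\<Pi>)) \<Otimes>\<^sub>M uniform_measure lborel {0..1}"
      unfolding joint_measure_def perm_measure_def
      by (intro measurable_compose[OF measurable_snd measurable_snd])
    from measurable_compose[OF this borel_measurable_mean_rand_pvalue_lt[where Y="?\<Pi>"]]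
    show "(\<lambda>\<omega>. (\<Sum>\<pi>\<in>?\<Pi>. of_bool (?lt (G_supnorm A I L \<pi>) \<omega>)) / card ?\<Pi>) \<in> borel_measurable ?\<Omega>"
      by (simp add: p_multi_eq_rand_pvalue perm_measure_def)
    show "AE \<omega> in ?\<Omega>. (\<Sum>\<sigma>\<in>?\<Pi>. indicator E (\<Phi> \<sigma> \<omega>)) / card ?\<Pi>
        = (\<Sum>\<pi>\<in>?\<Pi>. of_bool (?lt (G_supnorm A I L \<pi>) \<omega>)) / card ?\<Pi>"
      using AE_inj_on_score[OF P prob_space_imp_sigma_finite[OF prob_space_perms_uniform[of B n]] \<open>\<epsilon> > 0\<close> S]
      unfolding joint_measure_def[symmetric]
    proof (rule AE_mp[OF _ AE_I2[OF impI]])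
      fix \<omega> assume \<omega>: "\<omega> \<in> space ?\<Omega>" and inj: "inj_on (?s \<omega>) {1..n}"
      have D: "fst \<omega> \<in> space (PiM {1..n} (\<lambda>_. P))"
        using \<omega> by (auto simp: joint_measure_def space_pair_measure)
      have "indicator E (\<Phi> \<sigma> \<omega>) = (of_bool (?lt (T_multi A I L (score S \<epsilon>
          (restrict (fst \<omega> \<circ> \<sigma>) {1..n}) (restrict (fst (snd \<omega>) \<circ> \<sigma>) {1..n}))) \<omega>) :: real)"
        if "\<sigma> \<in> ?\<Pi>" for \<sigma>
        using measurable_space[OF \<Phi>(1)[OF that] \<omega>] by (simp add: E_def \<Phi>_def indicator_def)
      then have "(\<Sum>\<sigma>\<in>?\<Pi>. indicator E (\<Phi> \<sigma> \<omega>) :: real) = (\<Sum>\<sigma>\<in>?\<Pi>. of_bool (?lt (T_multi A I L (score S \<epsilon>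
          (restrict (fst \<omega> \<circ> \<sigma>) {1..n}) (restrict (fst (snd \<omega>) \<circ> \<sigma>) {1..n}))) \<omega>))"
        by (rule sum.cong[OF refl])
      also have "\<dots> = (\<Sum>\<pi>\<in>?\<Pi>. of_bool (?lt (G_supnorm A I L \<pi>) \<omega>))"
        by (rule sum_permutations_T_multi_score[OF sym A I D inj])
      finally show "(\<Sum>\<sigma>\<in>?\<Pi>. indicator E (\<Phi> \<sigma> \<omega>)) / card ?\<Pi>
          = (\<Sum>\<pi>\<in>?\<Pi>. of_bool (?lt (G_supnorm A I L \<pi>) \<omega>)) / card ?\<Pi>"
        by simp
    qed
  qed
  also have "E = {(D, e, perms, U) \<in> space ?\<Omega>. p_multi A I L B (T_multi A I L (score S \<epsilon> D e)) perms U < \<alpha>}"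
    by (auto simp: E_def)
  finally show ?thesis
    by simp
qed

theorem theorem3:
  fixes P :: "'z measure"
    and S :: "'z \<Rightarrow> (nat \<Rightarrow> 'z) \<Rightarrow> real"
    and \<epsilon> :: real
    and A :: "nat list \<Rightarrow> real"
    and I :: "nat \<Rightarrow> nat set"
    and n L B :: nat
    and \<alpha> :: real
  assumes "prob_space P"
    and "(\<lambda>(z, d). S z d) \<in> P \<Otimes>\<^sub>M PiM {1..n} (\<lambda>_. P) \<rightarrow>\<^sub>M borel"
    and "\<forall>z \<in> space P. \<forall>d \<in> space (PiM {1..n} (\<lambda>_. P)). \<forall>\<pi>.
           \<pi> permutes {1..n} \<longrightarrow> S z (d \<circ> \<pi>) = S z d"
    and "\<epsilon> > 0"
    and "\<forall>r. A r \<ge> 0"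
    and "L \<ge> 1"
    and "\<forall>l \<in> {1..L}. \<exists>a b. 1 \<le> a \<and> a \<le> b \<and> b \<le> n \<and> I l = {a..b}"
    and "B \<ge> 1"
    and "0 < \<alpha>" and "\<alpha> < 1"
  shows "measure (joint_measure P n B)
           {(D, e, perms, U) \<in> space (joint_measure P n B).
              p_multi A I L B (T_multi A I L (score S \<epsilon> D e)) perms U < \<alpha>} = \<alpha>"
proof -
  let ?\<Pi> = "{\<pi>. \<pi> permutes {1..n}}"
  let ?R = "PiM {1..B} (\<lambda>_. perm_measure n) \<Otimes>\<^sub>M uniform_measure lborel {0..1::real}"
  let ?h = "\<lambda>z. (\<Sum>\<pi>\<in>?\<Pi>.
      of_bool (rand_pvalue (G_supnorm A I L) B (G_supnorm A I L \<pi>) (fst z) (snd z) < \<alpha>)) / card ?\<Pi>"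
  txt \<open>Of the intervals only their inclusion in {1..n} matters.\<close>
  have I: "\<forall>l\<in>{1..L}. I l \<subseteq> {1..n}"
    using assms(7) by fastforce
  have h: "?h \<in> borel_measurable ?R"
    unfolding perm_measure_def by (rule borel_measurable_mean_rand_pvalue_lt)
  have "measure (joint_measure P n B)
           {(D, e, perms, U) \<in> space (joint_measure P n B).
              p_multi A I L B (T_multi A I L (score S \<epsilon> D e)) perms U < \<alpha>}
      = (\<integral>\<omega>. ?h (snd (snd \<omega>)) \<partial>joint_measure P n B)"
    using measure_p_multi_lt_eq_mean[OF assms(1-5) I] by (simp add: p_multi_eq_rand_pvalue)
  also have "\<dots> = (\<integral>z. ?h z \<partial>?R)"
    using assms(1) h by (rule integral_joint_measure_snd_snd)
  also have "\<dots> = \<alpha>"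
    unfolding perm_measure_def using assms(9,10)
    by (intro rand_pvalue_exact finite_permutations) (auto intro: permutes_id)
  finally show ?thesis .
qed

end
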